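(* Let $k\in\{1,\dots,n-1\}$, $-\infty<a_i<b_i<\infty$ for $i=1,\dots,n-k$, and $D=\mathbb R^k\times\prod_{i=1}^{n-k}(a_i,b_i)\subseteq\mathbb R^n$. Let $X(D)$, $Y(D)$ be rearrangement-invariant spaces on $D$ such that $W_0^1X(D)$ is continuously embedded in $Y(D)$, and denote by $I$ this canonical embedding. If $Y(D)$ has absolutely continuous norm, then $e_m(I)=\|I\|$ for every $m\in\mathbb N$; that is, $I$ is maximally noncompact ($\beta(I)=\|I\|$).
   Context: Throughout, $n\ge2$. Rearrangement-invariant spaces: let $\mathfrak M^+(D)$ be the nonnegative measurable functions on $D$; a functional $\varrho\colon\mathfrak M^+(D)\to[0,\infty]$ is a rearrangement-invariant Banach function norm if for all $f,g,F_j\in\mathfrak M^+(D)$, $\alpha\ge0$, measurable $E\subseteq D$: (i) $\varrho(f)=0$ iff $f=0$ a.e., $\varrho(\alpha f)=\alpha\varrho(f)$, $\varrho(f+g)\le\varrho(f)+\varrho(g)$; (ii) $0\le g\le f$ a.e. implies $\varrho(g)\le\varrho(f)$; (iii) $0\le F_j\nearrow f$ a.e. implies $\varrho(F_j)\nearrow\varrho(f)$; (iv) $|E|<\infty$ implies $\varrho(\chi_E)<\infty$; (v) if $|E|<\infty$ there is $C_E$ with $\int_E f\le C_E\varrho(f)$; (vi) $\varrho(f)=\varrho(g)$ whenever $f,g$ are equimeasurable. Then $X(D)=\{f\text{ measurable}:\varrho(|f|)<\infty\}$, $\|f\|_{X(D)}=\varrho(|f|)$. $X(D)$ has absolutely continuous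 norm if for every $f\in X(D)$ and every sequence of measurable $E_k\subseteq D$ with $\chi_{E_k}\to0$ a.e., $\|f\chi_{E_k}\|_{X(D)}\to0$. The Sobolev-type space $W^1X(D)$ is the set of weakly differentiable $u\in X(D)$ with $|\nabla u|\in X(D)$, normed by $\|u\|_{W^1X(D)}=\|u\|_{X(D)}+\||\nabla u|_{\ell^1}\|_{X(D)}$, where $|\nabla u|_{\ell^1}=\sum_{i=1}^n|\partial u/\partial x_i|$; $W_0^1X(D)$ is the closure of $\mathcal C_0^\infty(D)$ in $W^1X(D)$. For a bounded linear $T\colon X\to Y$ between Banach spaces, the $m$-th entropy number is $e_m(T)=\inf\{\varepsilon>0: \exists y_1,\dots,y_{2^{m-1}}\in Y \text{ with } T(B_X)\subseteq\bigcup_{j}(y_j+\varepsilon B_Y)\}$, where $B_X,B_Y$ are closed unit balls; the measure of noncompactness is $\beta(T)=\lim_{m\to\infty}e_m(T)$, and $T$ is maximally noncompact if $\beta(T)=\|T\|$. *)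

theory Defs
  imports "HOL-Analysis.Analysis"
begin

definition slab_domain :: "'n::finite set \<Rightarrow> ('n \<Rightarrow> real) \<Rightarrow> ('n \<Rightarrow> real) \<Rightarrow> (real^'n) set" where
  "slab_domain K a b = {x. \<forall>i. i \<notin> K \<longrightarrow> a i < x $ i \<and> x $ i < b i}"

definition nonneg_meas :: "(real^'n::finite) set \<Rightarrow> (real^'n \<Rightarrow> real) \<Rightarrow> bool" where
  "nonneg_meas D f \<longleftrightarrow> f \<in> borel_measurable (lebesgue_on D) \<and> (\<forall>x\<in>D. 0 \<le> f x)"

definition equimeasurable :: "(real^'n::finite) set \<Rightarrow> (real^'n \<Rightarrow> real) \<Rightarrow> (real^'n \<Rightarrow> real) \<Rightarrow> bool" where
  "equimeasurable D f g \<longleftrightarrow>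
     (\<forall>t::real. t \<ge> 0 \<longrightarrow> emeasure lebesgue {x\<in>D. f x > t} = emeasure lebesgue {x\<in>D. g x > t})"

definition ri_bfn :: "(real^'n::finite) set \<Rightarrow> ((real^'n \<Rightarrow> real) \<Rightarrow> ennreal) \<Rightarrow> bool" where
  "ri_bfn D \<rho> \<longleftrightarrow>
     \<comment> \<open>(i)\<close>
     (\<forall>f. nonneg_meas D f \<longrightarrow> (\<rho> f = 0 \<longleftrightarrow> (AE x in lebesgue_on D. f x = 0))) \<and>
     (\<forall>f \<alpha>. nonneg_meas D f \<and> \<alpha> \<ge> 0 \<longrightarrow> \<rho> (\<lambda>x. \<alpha> * f x) = ennreal \<alpha> * \<rho> f) \<and>
     (\<forall>f g. nonneg_meas D f \<and> nonneg_meas D g \<longrightarrow> \<rho> (\<lambda>x. f x + g x) \<le> \<rho> f + \<rho> g) \<and>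
     \<comment> \<open>(ii)\<close>
     (\<forall>f g. nonneg_meas D f \<and> nonneg_meas D g \<and> (AE x in lebesgue_on D. g x \<le> f x)
        \<longrightarrow> \<rho> g \<le> \<rho> f) \<and>
     \<comment> \<open>(iii)\<close>
     (\<forall>F f. (\<forall>j. nonneg_meas D (F j)) \<and> nonneg_meas D f \<and>
        (AE x in lebesgue_on D. incseq (\<lambda>j. F j x) \<and> (\<lambda>j. F j x) \<longlonglongrightarrow> f x)
        \<longrightarrow> incseq (\<lambda>j. \<rho> (F j)) \<and> (\<lambda>j. \<rho> (F j)) \<longlonglongrightarrow> \<rho> f) \<and>
     \<comment> \<open>(iv)\<close>
     (\<forall>E. E \<in> sets lebesgue \<and> E \<subseteq> D \<and> emeasure lebesgue E < \<infinity> \<longrightarrow> \<rho> (indicator E) < \<infinity>) \<and>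
     \<comment> \<open>(v)\<close>
     (\<forall>E. E \<in> sets lebesgue \<and> E \<subseteq> D \<and> emeasure lebesgue E < \<infinity> \<longrightarrow>
        (\<exists>C::real. \<forall>f. nonneg_meas D f \<longrightarrow>
           (\<integral>\<^sup>+ x. ennreal (f x) * indicator E x \<partial>lebesgue) \<le> ennreal C * \<rho> f)) \<and>
     \<comment> \<open>(vi)\<close>
     (\<forall>f g. nonneg_meas D f \<and> nonneg_meas D g \<and> equimeasurable D f g \<longrightarrow> \<rho> f = \<rho> g)"

definition ri_space :: "(real^'n::finite) set \<Rightarrow> ((real^'n \<Rightarrow> real) \<Rightarrow> ennreal) \<Rightarrow> (real^'n \<Rightarrow> real) set" where
  "ri_space D \<rho> = {f. f \<in> borel_measurable (lebesgue_on D) \<and> \<rho> (\<lambda>x. \<bar>f x\<bar>) < \<infinity>}"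

definition ri_norm :: "((real^'n::finite \<Rightarrow> real) \<Rightarrow> ennreal) \<Rightarrow> (real^'n \<Rightarrow> real) \<Rightarrow> real" where
  "ri_norm \<rho> f = enn2real (\<rho> (\<lambda>x. \<bar>f x\<bar>))"

definition abs_cont_norm :: "(real^'n::finite) set \<Rightarrow> ((real^'n \<Rightarrow> real) \<Rightarrow> ennreal) \<Rightarrow> bool" where
  "abs_cont_norm D \<rho> \<longleftrightarrow>
     (\<forall>f \<in> ri_space D \<rho>. \<forall>E :: nat \<Rightarrow> (real^'n) set.
        (\<forall>k. E k \<in> sets lebesgue \<and> E k \<subseteq> D) \<and>
        (AE x in lebesgue_on D. (\<lambda>k. indicator (E k) x :: real) \<longlonglongrightarrow> 0)
        \<longrightarrow> (\<lambda>k. ri_norm \<rho> (\<lambda>x. f x * indicator (E k) x)) \<longlonglongrightarrow> 0)"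

definition partial_d :: "'n::finite \<Rightarrow> (real^'n \<Rightarrow> real) \<Rightarrow> real^'n \<Rightarrow> real" where
  "partial_d i f x = deriv (\<lambda>t. f (x + t *\<^sub>R axis i 1)) 0"

primrec pd :: "'n::finite list \<Rightarrow> (real^'n \<Rightarrow> real) \<Rightarrow> real^'n \<Rightarrow> real" where
  "pd [] f = f"
| "pd (i # is) f = partial_d i (pd is f)"

definition test_fun :: "(real^'n::finite) set \<Rightarrow> (real^'n \<Rightarrow> real) \<Rightarrow> bool" where
  "test_fun D \<phi> \<longleftrightarrow>
     (\<forall>is. continuous_on UNIV (pd is \<phi>) \<and>
        (\<forall>i x. (\<lambda>t. pd is \<phi> (x + t *\<^sub>R axis i 1)) differentiable (at 0))) \<and>
     compact (closure {x. \<phi> x \<noteq> 0}) \<and> closure {x. \<phi> x \<noteq> 0} \<subseteq> D"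

definition locally_integrable :: "(real^'n::finite) set \<Rightarrow> (real^'n \<Rightarrow> real) \<Rightarrow> bool" where
  "locally_integrable D u \<longleftrightarrow> (\<forall>C. compact C \<and> C \<subseteq> D \<longrightarrow> set_integrable lebesgue C u)"

definition weak_partial :: "(real^'n::finite) set \<Rightarrow> (real^'n \<Rightarrow> real) \<Rightarrow> 'n \<Rightarrow> (real^'n \<Rightarrow> real) \<Rightarrow> bool" where
  "weak_partial D u i g \<longleftrightarrow> locally_integrable D u \<and> locally_integrable D g \<and>
     (\<forall>\<phi>. test_fun D \<phi> \<longrightarrow>
        (\<integral>x. u x * partial_d i \<phi> x \<partial>lebesgue) = - (\<integral>x. g x * \<phi> x \<partial>lebesgue))"

definition sobolev :: "(real^'n::finite) set \<Rightarrow> ((real^'n \<Rightarrow> real) \<Rightarrow> ennreal) \<Rightarrow> (real^'n \<Rightarrow> real) set" where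
  "sobolev D \<rho> = {u \<in> ri_space D \<rho>. \<exists>G. (\<forall>i. weak_partial D u i (G i)) \<and>
       (\<lambda>x. \<Sum>i\<in>UNIV. \<bar>G i x\<bar>) \<in> ri_space D \<rho>}"

text \<open>Weak gradient (unique a.e. on D, so the choice is irrelevant for norms).\<close>
definition weak_grad :: "(real^'n::finite) set \<Rightarrow> (real^'n \<Rightarrow> real) \<Rightarrow> 'n \<Rightarrow> real^'n \<Rightarrow> real" where
  "weak_grad D u = (SOME G. \<forall>i. weak_partial D u i (G i))"

definition sob_norm :: "(real^'n::finite) set \<Rightarrow> ((real^'n \<Rightarrow> real) \<Rightarrow> ennreal) \<Rightarrow> (real^'n \<Rightarrow> real) \<Rightarrow> real" where
  "sob_norm D \<rho> u = ri_norm \<rho> u + ri_norm \<rho> (\<lambda>x. \<Sum>i\<in>UNIV. \<bar>weak_grad D u i x\<bar>)"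

definition sobolev0 :: "(real^'n::finite) set \<Rightarrow> ((real^'n \<Rightarrow> real) \<Rightarrow> ennreal) \<Rightarrow> (real^'n \<Rightarrow> real) set" where
  "sobolev0 D \<rho> = {u \<in> sobolev D \<rho>. \<exists>\<phi> :: nat \<Rightarrow> real^'n \<Rightarrow> real.
       (\<forall>j. test_fun D (\<phi> j) \<and> \<phi> j \<in> sobolev D \<rho>) \<and>
       (\<lambda>j. sob_norm D \<rho> (\<lambda>x. \<phi> j x - u x)) \<longlonglongrightarrow> 0}"

definition sobolev_embedded :: "(real^'n::finite) set \<Rightarrow> ((real^'n \<Rightarrow> real) \<Rightarrow> ennreal) \<Rightarrow> ((real^'n \<Rightarrow> real) \<Rightarrow> ennreal) \<Rightarrow> bool" where
  "sobolev_embedded D \<rho>X \<rho>Y \<longleftrightarrow> sobolev0 D \<rho>X \<subseteq> ri_space D \<rho>Y \<and>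
     (\<exists>C. \<forall>u \<in> sobolev0 D \<rho>X. ri_norm \<rho>Y u \<le> C * sob_norm D \<rho>X u)"

definition emb_norm :: "(real^'n::finite) set \<Rightarrow> ((real^'n \<Rightarrow> real) \<Rightarrow> ennreal) \<Rightarrow> ((real^'n \<Rightarrow> real) \<Rightarrow> ennreal) \<Rightarrow> real" where
  "emb_norm D \<rho>X \<rho>Y = Sup {ri_norm \<rho>Y u | u. u \<in> sobolev0 D \<rho>X \<and> sob_norm D \<rho>X u \<le> 1}"

definition entropy_number :: "(real^'n::finite) set \<Rightarrow> ((real^'n \<Rightarrow> real) \<Rightarrow> ennreal) \<Rightarrow> ((real^'n \<Rightarrow> real) \<Rightarrow> ennreal) \<Rightarrow> nat \<Rightarrow> real" where
  "entropy_number D \<rho>X \<rho>Y m = Inf {\<epsilon>. \<epsilon> > 0 \<and>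
     (\<exists>y :: nat \<Rightarrow> real^'n \<Rightarrow> real. (\<forall>j < 2^(m-1). y j \<in> ri_space D \<rho>Y) \<and>
        (\<forall>u \<in> sobolev0 D \<rho>X. sob_norm D \<rho>X u \<le> 1 \<longrightarrow>
           (\<exists>j < 2^(m-1). ri_norm \<rho>Y (\<lambda>x. u x - y j x) \<le> \<epsilon>)))}"

end

theory Submission
  imports Defs "HOL-Computational_Algebra.Polynomial"
begin

text \<open>The slab is invariant under the translations \<open>x \<mapsto> x + s e\<^sub>i\<close> along an unbounded
  coordinate \<open>i \<in> K\<close>. These preserve the \<open>W\<^sub>0\<^sup>1X\<close> norm (by rearrangement invariance of \<open>X\<close>
  and uniqueness of weak derivatives, i.e.\ the fundamental lemma of the calculus of variations)
  and the \<open>Y\<close> norm. Given finitely many centres \<open>y\<^sub>j\<close> and \<open>u\<close> in the unit ball, absolute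
  continuity of the \<open>Y\<close> norm makes the parts of \<open>u\<close> and of all \<open>y\<^sub>j\<close> outside a band
  \<open>|x\<^sub>i| \<le> R\<close> small. A far translate of \<open>u\<close> is then essentially disjoint from every \<open>y\<^sub>j\<close>, so
  a centre within \<open>\<epsilon>\<close> of it forces \<open>\<parallel>u\<parallel>\<^sub>Y \<le> \<epsilon>\<close> up to small errors. Thus no finite net beats
  the radius \<open>\<parallel>I\<parallel>\<close>, which the single centre \<open>0\<close> attains.\<close>

section \<open>Smooth bump functions\<close>

definition derivative_tower :: "(nat \<Rightarrow> real \<Rightarrow> real) \<Rightarrow> bool" where
  "derivative_tower H \<longleftrightarrow> (\<forall>n x. (H n has_real_derivative H (Suc n) x) (at x))"

lemma derivative_tower_continuous: "derivative_tower H \<Longrightarrow> continuous_on UNIV (H n)"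
  unfolding derivative_tower_def by (meson DERIV_isCont continuous_at_imp_continuous_on)

lemma poly_times_exp_neg_tendsto_0: "((\<lambda>y. poly q y * exp (- y)) \<longlongrightarrow> (0::real)) at_top"
proof -
  have "((\<lambda>y. \<Sum>i\<le>degree q. coeff q i * (y ^ i / exp y)) \<longlongrightarrow> (\<Sum>i\<le>degree q. coeff q i * 0)) at_top"
    by (intro tendsto_intros tendsto_power_div_exp_0)
  moreover have "(\<lambda>y. \<Sum>i\<le>degree q. coeff q i * (y ^ i / exp y)) = (\<lambda>y. poly q y * exp (- y))"
    by (simp add: poly_altdef sum_distrib_right exp_minus divide_inverse mult.assoc)
  ultimately show ?thesis by simp
qed

lemma poly_times_exp_neg_has_derivative:
  "((\<lambda>y. poly p y * exp (-y)) has_real_derivative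
     (poly (pderiv p) y * exp (-y) - poly p y * exp (-y))) (at y)"
proof -
  have "((\<lambda>y. poly p y * exp (-y)) has_real_derivative
      (poly (pderiv p) y * exp (-y) + poly p y * (exp (-y) * (- 1)))) (at y)"
    by (auto intro!: derivative_eq_intros poly_DERIV)
  then show ?thesis by simp
qed

text \<open>\<open>flat_deriv n\<close> is the \<open>n\<close>-th derivative of the flat function \<open>exp (-1/x)\<close> (extended
  by \<open>0\<close> to \<open>x \<le> 0\<close>); the recurrence for \<open>flat_poly\<close> comes from the chain rule with
  \<open>(1/x)' = -(1/x)\<^sup>2\<close>.\<close>

fun flat_poly :: "nat \<Rightarrow> real poly" where
  "flat_poly 0 = 1"
| "flat_poly (Suc n) = [:0,0,1:] * (flat_poly n - pderiv (flat_poly n))"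

definition flat_deriv :: "nat \<Rightarrow> real \<Rightarrow> real" where
  "flat_deriv n x = (if x > 0 then poly (flat_poly n) (1/x) * exp (- (1/x)) else 0)"

lemma flat_deriv_0: "flat_deriv 0 s = (if s > 0 then exp (- (1/s)) else 0)"
  by (simp add: flat_deriv_def)

lemma flat_deriv_div_tendsto_0: "((\<lambda>h. flat_deriv n h / h) \<longlongrightarrow> 0) (at_right 0)"
proof -
  have "((\<lambda>y. poly ([:0,1:] * flat_poly n) y * exp (- y)) \<longlongrightarrow> (0::real)) at_top"
    by (rule poly_times_exp_neg_tendsto_0)
  moreover have "eventually (\<lambda>y. poly ([:0,1:] * flat_poly n) y * exp (- y)
      = flat_deriv n (inverse y) / inverse y) at_top"
    using eventually_gt_at_top[of "0::real"]
    by eventually_elim (simp add: flat_deriv_def divide_inverse)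
  ultimately have "((\<lambda>y. flat_deriv n (inverse y) / inverse y) \<longlongrightarrow> (0::real)) at_top"
    by (rule Lim_transform_eventually)
  then show ?thesis
    by (subst filterlim_at_right_to_top) simp
qed

lemma flat_deriv_has_derivative: "(flat_deriv n has_real_derivative flat_deriv (Suc n) x) (at x)"
proof -
  consider "x > 0" | "x < 0" | "x = 0" by linarith
  then show ?thesis
  proof cases
    case 1
    have inv: "((\<lambda>x. 1/x) has_real_derivative (- ((1/x)^2))) (at x)"
      using 1 DERIV_inverse[of x] by (simp add: divide_inverse power2_eq_square power_inverse)
    have "((\<lambda>x. poly (flat_poly n) (1/x) * exp (- (1/x))) has_real_derivative
       (poly (pderiv (flat_poly n)) (1/x) * exp (-(1/x)) - poly (flat_poly n) (1/x) * exp (-(1/x)))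
         * (- ((1/x)^2))) (at x)"
      using DERIV_chain2[OF poly_times_exp_neg_has_derivative inv] .
    moreover have "(poly (pderiv (flat_poly n)) (1/x) * exp (-(1/x)) - poly (flat_poly n) (1/x) * exp (-(1/x)))
         * (- ((1/x)^2)) = flat_deriv (Suc n) x"
      using 1 by (simp add: flat_deriv_def algebra_simps power2_eq_square)
    ultimately have "((\<lambda>x. poly (flat_poly n) (1/x) * exp (- (1/x))) has_real_derivative
        flat_deriv (Suc n) x) (at x)"
      by simp
    then show ?thesis
      by (rule has_field_derivative_transform_within_open[of _ _ _ "{0<..}"])
         (use 1 in \<open>auto simp: flat_deriv_def\<close>)
  next
    case 2
    have "((\<lambda>_. 0) has_real_derivative flat_deriv (Suc n) x) (at x)"
      using 2 by (simp add: flat_deriv_def)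
    then show ?thesis
      by (rule has_field_derivative_transform_within_open[of _ _ _ "{..<0}"])
         (use 2 in \<open>auto simp: flat_deriv_def\<close>)
  next
    case 3
    have "((\<lambda>h. (flat_deriv n (0 + h) - flat_deriv n 0) / h) \<longlongrightarrow> 0) (at 0)"
    proof (rule filterlim_split_at)
      show "((\<lambda>h. (flat_deriv n (0 + h) - flat_deriv n 0) / h) \<longlongrightarrow> 0) (at_right 0)"
        using flat_deriv_div_tendsto_0 by (simp add: flat_deriv_def)
      have "eventually (\<lambda>h. 0 = (flat_deriv n (0 + h) - flat_deriv n 0) / h) (at_left (0::real))"
        by (auto simp: flat_deriv_def eventually_at_left_field intro!: exI[of _ "-1"])
      then show "((\<lambda>h. (flat_deriv n (0 + h) - flat_deriv n 0) / h) \<longlongrightarrow> 0) (at_left 0)"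
        by (rule Lim_transform_eventually[OF tendsto_const])
    qed
    then show ?thesis unfolding 3 DERIV_def by (simp add: flat_deriv_def)
  qed
qed

lemma derivative_tower_flat_deriv: "derivative_tower flat_deriv"
  by (simp add: derivative_tower_def flat_deriv_has_derivative)

definition leibniz_tower ::
    "(nat \<Rightarrow> real \<Rightarrow> real) \<Rightarrow> (nat \<Rightarrow> real \<Rightarrow> real) \<Rightarrow> nat \<Rightarrow> real \<Rightarrow> real" where
  "leibniz_tower H G n x = (\<Sum>i=0..n. real (n choose i) * H i x * G (n - i) x)"

lemma derivative_tower_leibniz:
  assumes H: "derivative_tower H" and G: "derivative_tower G"
  shows "derivative_tower (leibniz_tower H G)"
  unfolding derivative_tower_def
proof (intro allI)
  fix n x
  have dH: "(H k has_real_derivative H (Suc k) x) (at x)"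
    and dG: "(G k has_real_derivative G (Suc k) x) (at x)" for k
    using H G by (auto simp: derivative_tower_def)
  have Suc_choose: "Suc n choose k = (n choose k) + (if k = 0 then 0 else (n choose (k-1)))" for k
    by (cases k) simp_all
  have pascal: "(\<Sum>i = 0..n. real (n choose i) * (H (Suc i) x * G (n-i) x + G (Suc (n-i)) x * H i x)) =
      G 0 x * H (Suc n) x + (\<Sum>i = 0..n. H i x * (real (Suc n choose i) * G (Suc n - i) x))"
    apply (simp add: Suc_choose algebra_simps sum.distrib)
    apply (subst (4) sum_Suc_reindex)
    apply (auto simp: algebra_simps Suc_diff_le intro: sum.cong)
    done
  have "(leibniz_tower H G n has_real_derivative
      (\<Sum>i = 0..n. real (n choose i) * (H (Suc i) x * G (n-i) x + G (Suc (n-i)) x * H i x))) (at x)"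
    unfolding leibniz_tower_def[abs_def]
    by (rule DERIV_sum)
       (use DERIV_cmult[OF DERIV_mult[OF dH dG]] in \<open>simp add: mult.assoc\<close>)
  moreover have "(\<Sum>i = 0..n. real (n choose i) * (H (Suc i) x * G (n-i) x + G (Suc (n-i)) x * H i x))
      = leibniz_tower H G (Suc n) x"
    unfolding pascal leibniz_tower_def
    by (simp add: sum.atLeast0_atMost_Suc algebra_simps)
  ultimately show "(leibniz_tower H G n has_real_derivative leibniz_tower H G (Suc n) x) (at x)"
    by simp
qed

lemma derivative_tower_affine:
  assumes H: "derivative_tower H"
  shows "derivative_tower (\<lambda>n x. a ^ n * H n (a * x + b))"
  unfolding derivative_tower_def
proof (intro allI)
  fix n x
  have "((\<lambda>x. H n (a * x + b)) has_real_derivative H (Suc n) (a * x + b) * a) (at x)"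
    by (rule DERIV_chain2[of "H n"]) (use H in \<open>auto simp: derivative_tower_def intro!: derivative_eq_intros\<close>)
  from DERIV_cmult[OF this, of "a^n"]
  show "((\<lambda>x. a ^ n * H n (a * x + b)) has_real_derivative
      a ^ Suc n * H (Suc n) (a * x + b)) (at x)"
    by (simp add: algebra_simps)
qed

definition prod_tower :: "('n::finite \<Rightarrow> nat \<Rightarrow> real \<Rightarrow> real) \<Rightarrow> ('n \<Rightarrow> nat) \<Rightarrow> real^'n \<Rightarrow> real" where
  "prod_tower H m x = (\<Prod>j\<in>UNIV. H j (m j) (x $ j))"

lemma prod_tower_split: "prod_tower H m y = H i (m i) (y $ i) * (\<Prod>j\<in>UNIV-{i}. H j (m j) (y $ j))"
  unfolding prod_tower_def by (subst prod.remove[of UNIV i]) auto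

lemma prod_tower_has_derivative_axis:
  assumes H: "\<forall>j. derivative_tower (H j)"
  shows "((\<lambda>t. prod_tower H m (x + t *\<^sub>R axis i 1)) has_real_derivative
           prod_tower H (m(i := Suc (m i))) x) (at 0)"
proof -
  define c where "c = (\<Prod>j\<in>UNIV-{i}. H j (m j) (x $ j))"
  have eq: "prod_tower H m (x + t *\<^sub>R axis i 1) = H i (m i) (x$i + t) * c" for t
    unfolding prod_tower_split[of H m _ i] c_def
    by (auto simp: axis_def intro!: prod.cong)
  have d1: "(H i (m i) has_real_derivative H i (Suc (m i)) (x$i + 0)) (at (x$i + 0))"
    using H by (simp add: derivative_tower_def)
  have d2: "((\<lambda>t. x$i + t) has_real_derivative 1) (at 0)"
    by (auto intro!: derivative_eq_intros)
  have "((\<lambda>t. H i (m i) (x$i + t) * c) has_real_derivative H i (Suc (m i)) (x$i + 0) * 1 * c) (at 0)"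
    by (rule DERIV_cmult_right[OF DERIV_chain2[OF d1 d2]])
  moreover have "H i (Suc (m i)) (x$i + 0) * 1 * c = prod_tower H (m(i := Suc (m i))) x"
    unfolding prod_tower_split[of H _ _ i] c_def
    by (auto intro!: prod.cong)
  ultimately show ?thesis unfolding eq by simp
qed

lemma pd_prod_tower:
  assumes "\<forall>j. derivative_tower (H j)"
  shows "pd is (prod_tower H (\<lambda>_. 0)) = prod_tower H (count_list is)"
proof (induction "is")
  case (Cons i "is")
  have m: "(count_list is)(i := Suc (count_list is i)) = count_list (i # is)"
    by (auto simp: fun_eq_iff)
  have "partial_d i (prod_tower H (count_list is)) = prod_tower H (count_list (i # is))"
    unfolding partial_d_def m[symmetric]
    by (intro ext DERIV_imp_deriv prod_tower_has_derivative_axis[OF assms])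
  with Cons show ?case by (simp only: pd.simps)
qed simp

lemma continuous_prod_tower:
  assumes "\<forall>j. derivative_tower (H j)"
  shows "continuous_on UNIV (prod_tower H m)"
  unfolding prod_tower_def
  by (intro continuous_on_prod continuous_on_compose2[OF derivative_tower_continuous[of "H _" "m _"]])
     (use assms in \<open>auto intro!: continuous_intros\<close>)

lemma test_fun_prod_tower:
  fixes c d :: "real^'n::finite"
  assumes H: "\<forall>j. derivative_tower (H j)"
    and supp: "\<And>j t. t < c$j \<or> t > d$j \<Longrightarrow> H j 0 t = 0"
    and sub: "cbox c d \<subseteq> D"
  shows "test_fun D (prod_tower H (\<lambda>_. 0))"
proof -
  have S: "{x. prod_tower H (\<lambda>_. 0) x \<noteq> 0} \<subseteq> cbox c d"
    using supp by (force simp: prod_tower_def mem_box_cart not_less)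
  then have "closure {x. prod_tower H (\<lambda>_. 0) x \<noteq> 0} \<subseteq> cbox c d"
    by (rule closure_minimal) (rule closed_cbox)
  moreover have "compact (closure {x. prod_tower H (\<lambda>_. 0) x \<noteq> 0})"
    using S bounded_cbox bounded_subset compact_closure by blast
  ultimately show ?thesis
    unfolding test_fun_def pd_prod_tower[OF H]
    using sub continuous_prod_tower[OF H]
      differentiableI[OF has_field_derivative_imp_has_derivative[OF prod_tower_has_derivative_axis[OF H]]]
    by blast
qed

definition bump_factor :: "nat \<Rightarrow> real^'n \<Rightarrow> real^'n \<Rightarrow> 'n::finite \<Rightarrow> nat \<Rightarrow> real \<Rightarrow> real" where
  "bump_factor k c d j = leibniz_tower
      (\<lambda>n t. real (Suc k) ^ n * flat_deriv n (real (Suc k) * t + (- real (Suc k) * c$j)))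
      (\<lambda>n t. (- real (Suc k)) ^ n * flat_deriv n ((- real (Suc k)) * t + real (Suc k) * d$j))"

definition bump :: "nat \<Rightarrow> real^'n \<Rightarrow> real^'n \<Rightarrow> real^'n::finite \<Rightarrow> real" where
  "bump k c d = prod_tower (bump_factor k c d) (\<lambda>_. 0)"

lemma derivative_tower_bump_factor: "\<forall>j. derivative_tower (bump_factor k c d j)"
  unfolding bump_factor_def
  by (intro allI derivative_tower_leibniz derivative_tower_affine derivative_tower_flat_deriv)

lemma bump_factor_0:
  "bump_factor k c d j 0 t = flat_deriv 0 (real (Suc k) * (t - c$j)) * flat_deriv 0 (real (Suc k) * (d$j - t))"
  by (simp add: bump_factor_def leibniz_tower_def algebra_simps)

lemma bump_factor_0_eq_0: "t \<le> c$j \<or> t \<ge> d$j \<Longrightarrow> bump_factor k c d j 0 t = 0"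
  unfolding bump_factor_0 flat_deriv_0 by (auto simp: zero_less_mult_iff)

lemma bump_eq_0: "x \<notin> box c d \<Longrightarrow> bump k c d x = 0"
proof -
  assume "x \<notin> box c d"
  then obtain j where "x$j \<le> c$j \<or> x$j \<ge> d$j" by (auto simp: mem_box_cart not_less)
  then show ?thesis
    unfolding bump_def prod_tower_def by (intro prod_zero) (auto intro!: bump_factor_0_eq_0)
qed

lemma test_fun_bump: "cbox c d \<subseteq> D \<Longrightarrow> test_fun D (bump k c d)"
  unfolding bump_def
  by (rule test_fun_prod_tower[OF derivative_tower_bump_factor, of c d]) (auto intro: bump_factor_0_eq_0)

lemma bump_nonneg: "0 \<le> bump k c d x"
  unfolding bump_def prod_tower_def bump_factor_0 flat_deriv_0
  by (intro prod_nonneg mult_nonneg_nonneg ballI) auto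

lemma bump_le_1: "bump k c d x \<le> 1"
  unfolding bump_def prod_tower_def bump_factor_0 flat_deriv_0
  by (intro prod_le_1 conjI mult_nonneg_nonneg mult_le_one) auto

lemma bump_tendsto_indicator_box: "(\<lambda>k. bump k c d x) \<longlonglongrightarrow> indicator (box c d) x"
proof (cases "x \<in> box c d")
  case True
  have flat_tendsto_1: "(\<lambda>k. flat_deriv 0 (real (Suc k) * s)) \<longlonglongrightarrow> 1" if "s > 0" for s
  proof -
    have "(\<lambda>k. exp (- (inverse (real (Suc k)) * (1/s)))) \<longlonglongrightarrow> exp (- (0 * (1/s)))"
      by (intro tendsto_intros LIMSEQ_inverse_real_of_nat)
    moreover have "flat_deriv 0 (real (Suc k) * s) = exp (- (inverse (real (Suc k)) * (1/s)))" for k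
      using that by (simp add: flat_deriv_0 divide_inverse mult.commute)
    ultimately show ?thesis by simp
  qed
  have "(\<lambda>k. \<Prod>j\<in>UNIV. flat_deriv 0 (real (Suc k) * (x$j - c$j)) * flat_deriv 0 (real (Suc k) * (d$j - x$j)))
      \<longlonglongrightarrow> (\<Prod>j\<in>(UNIV::'a set). 1 * 1)"
    using True by (intro tendsto_prod tendsto_mult flat_tendsto_1) (auto simp: mem_box_cart)
  then show ?thesis using True by (simp add: bump_def prod_tower_def bump_factor_0)
qed (simp add: bump_eq_0)

lemma bump_measurable: "bump k c d \<in> borel_measurable lebesgue"
  using continuous_imp_measurable_on_sets_lebesgue[OF continuous_prod_tower[OF derivative_tower_bump_factor]]
  by (simp add: bump_def lebesgue_on_UNIV_eq)

section \<open>The fundamental lemma of the calculus of variations\<close>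

lemma nn_integral_pos_eq_neg_if_integral_0:
  fixes f :: "'a \<Rightarrow> real"
  assumes int: "integrable M f" and zero: "integral\<^sup>L M f = 0"
  shows "(\<integral>\<^sup>+x. ennreal (f x) \<partial>M) = (\<integral>\<^sup>+x. ennreal (- f x) \<partial>M)"
proof -
  have i1: "integrable M (\<lambda>x. max 0 (f x))" and i2: "integrable M (\<lambda>x. max 0 (- f x))"
    using int by (auto intro!: integrable_max)
  have "f = (\<lambda>x. max 0 (f x) - max 0 (- f x))" by (auto simp: fun_eq_iff)
  then have "integral\<^sup>L M f = integral\<^sup>L M (\<lambda>x. max 0 (f x)) - integral\<^sup>L M (\<lambda>x. max 0 (- f x))"
    using Bochner_Integration.integral_diff[OF i1 i2] by metis
  with zero have eq: "integral\<^sup>L M (\<lambda>x. max 0 (f x)) = integral\<^sup>L M (\<lambda>x. max 0 (- f x))" by simp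
  have max0: "ennreal (max 0 y) = ennreal y" for y :: real
    by (cases "y \<ge> 0") (auto simp: ennreal_neg max_def)
  have "(\<integral>\<^sup>+x. ennreal (f x) \<partial>M) = ennreal (integral\<^sup>L M (\<lambda>x. max 0 (f x)))"
    using nn_integral_eq_integral[OF i1] by (simp add: max0)
  also have "\<dots> = (\<integral>\<^sup>+x. ennreal (- f x) \<partial>M)"
    using nn_integral_eq_integral[OF i2] by (simp add: eq max0)
  finally show ?thesis .
qed

lemma AE_eq_0_if_box_integrals_eq_0_lborel:
  fixes h :: "'a::euclidean_space \<Rightarrow> real"
  assumes int: "integrable lborel h"
    and box: "\<And>a b. (\<integral>x. h x * indicator (box a b) x \<partial>lborel) = 0"
  shows "AE x in lborel. h x = 0"
proof -
  have [measurable]: "h \<in> borel_measurable borel"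
    using int by simp
  let ?E = "range (\<lambda>(a, b). box a b :: 'a set)"
  let ?A = "\<lambda>n::nat. box (- (real n *\<^sub>R One)) (real n *\<^sub>R One) :: 'a set"
  have "density lborel (\<lambda>x. ennreal (h x)) = density lborel (\<lambda>x. ennreal (- h x))"
  proof (rule measure_eqI_generator_eq[where \<Omega>=UNIV and E="?E" and A="?A"])
    show "Int_stable ?E"
      by (auto simp: Int_stable_def box_Int_box)
    show "?E \<subseteq> Pow UNIV" "sets (density lborel (\<lambda>x. ennreal (h x))) = sigma_sets UNIV ?E"
      "sets (density lborel (\<lambda>x. ennreal (- h x))) = sigma_sets UNIV ?E"
      by (simp_all add: borel_eq_box)
    show "range ?A \<subseteq> ?E" "(\<Union>i. ?A i) = UNIV"
      unfolding UN_box_eq_UNIV by auto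
    show "emeasure (density lborel (\<lambda>x. ennreal (h x))) (?A i) \<noteq> \<infinity>" for i
    proof -
      have "emeasure (density lborel (\<lambda>x. ennreal (h x))) (?A i)
          \<le> (\<integral>\<^sup>+x. ennreal (norm (h x)) \<partial>lborel)"
        by (auto simp: emeasure_density indicator_def ennreal_leI intro!: nn_integral_mono)
      also have "\<dots> < \<infinity>"
        using int by (simp add: integrable_iff_bounded)
      finally show ?thesis by simp
    qed
    show "emeasure (density lborel (\<lambda>x. ennreal (h x))) X
        = emeasure (density lborel (\<lambda>x. ennreal (- h x))) X" if "X \<in> ?E" for X
    proof -
      obtain a b where X: "X = box a b" using \<open>X \<in> ?E\<close> by auto
      have "integrable lborel (\<lambda>x. h x * indicator X x)"
        using integrable_mult_indicator[OF _ int, of X] X by (simp add: mult.commute)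
      from nn_integral_pos_eq_neg_if_integral_0[OF this]
      show ?thesis
        using box[of a b] X
        by (simp add: emeasure_density ennreal_mult' ennreal_mult'' indicator_def of_bool_def if_distrib
                 cong: if_cong)
    qed
  qed
  then have "AE x in lborel. ennreal (h x) = ennreal (- h x)"
    by (rule sigma_finite_measure.density_unique[OF sigma_finite_lborel, rotated 2]) simp_all
  then show ?thesis
    by eventually_elim (smt (verit) ennreal_eq_0_iff)
qed

lemma AE_eq_0_if_box_integrals_eq_0:
  fixes h :: "'a::euclidean_space \<Rightarrow> real"
  assumes int: "integrable lebesgue h"
    and box: "\<And>a b. (\<integral>x. h x * indicator (box a b) x \<partial>lebesgue) = 0"
  shows "AE x in lebesgue. h x = 0"
proof -
  have "h \<in> borel_measurable (completion lborel)"
    using int by simp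
  then obtain h' where h'm: "h' \<in> borel_measurable lborel" and "AE x in lborel. h x = h' x"
    using completion_ex_borel_measurable_real by blast
  then have ae: "AE x in lebesgue. h x = h' x"
    by (simp add: AE_completion_iff)
  have h'mc: "h' \<in> borel_measurable lebesgue"
    using h'm by (rule measurable_completion)
  have h'_int: "integrable lborel h'"
    using integrable_completion[OF h'm] integrable_cong_AE[OF _ h'mc ae] int by simp
  have "AE x in lborel. h' x = 0"
  proof (rule AE_eq_0_if_box_integrals_eq_0_lborel[OF h'_int])
    fix a b :: 'a
    have "(\<integral>x. h' x * indicator (box a b) x \<partial>lborel) = (\<integral>x. h' x * indicator (box a b) x \<partial>lebesgue)"
      by (rule integral_completion[symmetric]) (use h'm in measurable)
    also have "\<dots> = (\<integral>x. h x * indicator (box a b) x \<partial>lebesgue)"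
      using ae borel_measurable_integrable[OF int] h'mc
      by (intro integral_cong_AE)
         (auto intro!: borel_measurable_times borel_measurable_indicator elim!: eventually_mono)
    finally show "(\<integral>x. h' x * indicator (box a b) x \<partial>lborel) = 0"
      using box by simp
  qed
  then show ?thesis
    using ae by (simp add: AE_completion_iff) (auto elim: eventually_mono)
qed

lemma integral_mult_indicator_box_eq_0:
  fixes g :: "real^'n::finite \<Rightarrow> real"
  assumes li: "locally_integrable D g"
    and orth: "\<And>\<phi>. test_fun D \<phi> \<Longrightarrow> (\<integral>x. g x * \<phi> x \<partial>lebesgue) = 0"
    and sub: "cbox c d \<subseteq> D"
  shows "(\<integral>x. g x * indicator (box c d) x \<partial>lebesgue) = 0"
proof -
  define gc where "gc x = indicator (cbox c d) x *\<^sub>R g x" for x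
  have int: "integrable lebesgue gc"
    using li sub unfolding locally_integrable_def gc_def set_integrable_def by (simp add: compact_cbox)
  have on_box: "g x * \<beta> x = gc x * \<beta> x" if "\<And>x. x \<notin> box c d \<Longrightarrow> \<beta> x = 0" for x and \<beta> :: "_ \<Rightarrow> real"
    using that box_subset_cbox[of c d] by (cases "x \<in> box c d") (auto simp: gc_def)
  have "(\<lambda>k. \<integral>x. gc x * bump k c d x \<partial>lebesgue) \<longlonglongrightarrow> (\<integral>x. gc x * indicator (box c d) x \<partial>lebesgue)"
  proof (rule integral_dominated_convergence[where w="\<lambda>x. norm (gc x)"])
    show "AE x in lebesgue. norm (gc x * bump k c d x) \<le> norm (gc x)" for k
      using bump_nonneg[of k c d] bump_le_1[of k c d]
      by (intro AE_I2) (simp add: abs_mult mult_left_le)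
  qed (use int bump_measurable in \<open>auto intro!: tendsto_mult bump_tendsto_indicator_box borel_measurable_times
     borel_measurable_indicator\<close>)
  moreover have "(\<lambda>x. gc x * bump k c d x) = (\<lambda>x. g x * bump k c d x)" for k
    by (rule ext, rule on_box[symmetric]) (rule bump_eq_0)
  then have "(\<integral>x. gc x * bump k c d x \<partial>lebesgue) = 0" for k
    using orth[OF test_fun_bump[OF sub]] by (simp only:)
  moreover have "(\<lambda>x. g x * indicator (box c d) x) = (\<lambda>x. gc x * indicator (box c d) x)"
    by (rule ext, rule on_box) simp
  ultimately show ?thesis
    by (simp add: LIMSEQ_const_iff)
qed

lemma AE_eq_0_on_box_if_orthogonal_to_test_funs:
  fixes g :: "real^'n::finite \<Rightarrow> real"
  assumes li: "locally_integrable D g"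
    and orth: "\<And>\<phi>. test_fun D \<phi> \<Longrightarrow> (\<integral>x. g x * \<phi> x \<partial>lebesgue) = 0"
    and sub: "cbox c d \<subseteq> D"
  shows "AE x in lebesgue. x \<in> box c d \<longrightarrow> g x = 0"
proof -
  define h where "h x = g x * indicator (box c d) x" for x
  have "set_integrable lebesgue (cbox c d) g"
    using li sub unfolding locally_integrable_def by (simp add: compact_cbox)
  then have "integrable lebesgue (\<lambda>x. indicator (box c d) x *\<^sub>R (indicator (cbox c d) x *\<^sub>R g x))"
    unfolding set_integrable_def by (rule integrable_mult_indicator[rotated]) simp
  moreover have "(\<lambda>x. indicator (box c d) x *\<^sub>R (indicator (cbox c d) x *\<^sub>R g x)) = h"
    using box_subset_cbox[of c d] by (auto simp: fun_eq_iff h_def indicator_def)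
  ultimately have "integrable lebesgue h"
    by simp
  moreover have "(\<integral>x. h x * indicator (box a b) x \<partial>lebesgue) = 0" for a b
  proof -
    let ?c = "\<chi> i. max (c$i) (a$i)" and ?d = "\<chi> i. min (d$i) (b$i)"
    have "cbox ?c ?d \<subseteq> D"
      using sub by (auto simp: mem_box_cart)
    moreover have "(\<lambda>x. h x * indicator (box a b) x) = (\<lambda>x. g x * indicator (box ?c ?d) x)"
      by (auto simp: h_def fun_eq_iff indicator_def mem_box_cart)
    ultimately show ?thesis
      using integral_mult_indicator_box_eq_0[OF li orth] by simp
  qed
  ultimately have "AE x in lebesgue. h x = 0"
    by (rule AE_eq_0_if_box_integrals_eq_0)
  then show ?thesis
    by eventually_elim (auto simp: h_def)
qed

lemma AE_eq_0_if_orthogonal_to_test_funs: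
  fixes g :: "real^'n::finite \<Rightarrow> real"
  assumes D: "open D" and li: "locally_integrable D g"
    and orth: "\<And>\<phi>. test_fun D \<phi> \<Longrightarrow> (\<integral>x. g x * \<phi> x \<partial>lebesgue) = 0"
  shows "AE x in lebesgue. x \<in> D \<longrightarrow> g x = 0"
proof -
  obtain \<D> where cnt: "countable \<D>" and sub: "\<D> \<subseteq> Pow D"
    and box: "\<And>X. X \<in> \<D> \<Longrightarrow> \<exists>a b. X = cbox a b" and un: "\<Union>\<D> = D"
    using open_countable_Union_open_cbox[OF D] by metis
  have "AE x in lebesgue. x \<in> X \<longrightarrow> g x = 0" if XD: "X \<in> \<D>" for X
  proof -
    obtain a b where X: "X = cbox a b" using box XD by blast
    have "AE x in lebesgue. x \<in> box a b \<longrightarrow> g x = 0"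
      using AE_eq_0_on_box_if_orthogonal_to_test_funs[OF li orth] sub XD X by blast
    moreover have "AE x in lebesgue. x \<notin> cbox a b - box a b"
      using negligible_frontier_interval negligible_iff_null_sets AE_not_in by blast
    ultimately show ?thesis unfolding X by eventually_elim auto
  qed
  then have "AE x in lebesgue. \<forall>X\<in>\<D>. x \<in> X \<longrightarrow> g x = 0"
    by (rule AE_ball_countable'[OF _ cnt])
  then show ?thesis by eventually_elim (use un in blast)
qed

lemma eq_0_outside_closure_support:
  fixes f :: "'a::topological_space \<Rightarrow> 'b::zero"
  assumes "x \<notin> closure {x. f x \<noteq> 0}"
  shows "f x = 0"
  using assms closure_subset[of "{x. f x \<noteq> 0}"] by auto

lemma partial_d_eq_0_outside_support:
  fixes \<phi> :: "real^'n::finite \<Rightarrow> real"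
  assumes x: "x \<notin> closure {x. \<phi> x \<noteq> 0}"
  shows "partial_d i \<phi> x = 0"
proof -
  have "open (- closure {x. \<phi> x \<noteq> 0})"
    by auto
  then have "open ((\<lambda>t. x + t *\<^sub>R axis i 1) -` (- closure {x. \<phi> x \<noteq> 0}))"
    by (rule continuous_open_vimage) (intro continuous_intros)
  then have "((\<lambda>t. \<phi> (x + t *\<^sub>R axis i 1)) has_real_derivative 0) (at 0)"
  proof (rule has_field_derivative_transform_within_open[of "\<lambda>_. 0", rotated])
    show "0 \<in> (\<lambda>t. x + t *\<^sub>R axis i 1) -` (- closure {x. \<phi> x \<noteq> 0})"
      using x by simp
    show "0 = \<phi> (x + t *\<^sub>R axis i 1)" if "t \<in> (\<lambda>t. x + t *\<^sub>R axis i 1) -` (- closure {x. \<phi> x \<noteq> 0})" for t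
      using eq_0_outside_closure_support[of "x + t *\<^sub>R axis i 1" \<phi>] that by simp
  qed simp
  then show ?thesis unfolding partial_d_def by (rule DERIV_imp_deriv)
qed

lemma integrable_mult_compact_support:
  fixes \<psi> G :: "real^'n::finite \<Rightarrow> real"
  assumes cont: "continuous_on UNIV \<psi>" and S: "compact S" "S \<subseteq> D"
    and zero: "\<And>x. x \<notin> S \<Longrightarrow> \<psi> x = 0" and li: "locally_integrable D G"
  shows "integrable lebesgue (\<lambda>x. G x * \<psi> x)"
proof -
  have "set_integrable lebesgue S G"
    using li S unfolding locally_integrable_def by blast
  then have int: "integrable lebesgue (\<lambda>x. indicator S x *\<^sub>R G x)"
    by (simp add: set_integrable_def)
  have "compact (\<psi> ` S)"
    by (rule compact_continuous_image[OF continuous_on_subset[OF cont] S(1)]) auto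
  then obtain B where B: "\<And>x. x \<in> S \<Longrightarrow> \<bar>\<psi> x\<bar> \<le> B"
    using compact_imp_bounded bounded_real by (metis image_eqI)
  have eq: "(\<lambda>x. G x * \<psi> x) = (\<lambda>x. (indicator S x *\<^sub>R G x) * \<psi> x)"
    using zero by (auto simp: fun_eq_iff indicator_def)
  have "\<psi> \<in> borel_measurable lebesgue"
    using continuous_imp_measurable_on_sets_lebesgue[OF cont] by (simp add: lebesgue_on_UNIV_eq)
  then have m: "(\<lambda>x. G x * \<psi> x) \<in> borel_measurable lebesgue"
    unfolding eq by (intro borel_measurable_times borel_measurable_integrable[OF int])
  have bound: "norm (G x * \<psi> x) \<le> norm (\<bar>B\<bar> * (indicator S x *\<^sub>R G x))" for x
  proof (cases "x \<in> S")
    case True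
    have "\<bar>G x\<bar> * \<bar>\<psi> x\<bar> \<le> \<bar>G x\<bar> * \<bar>B\<bar>"
      using B[OF True] by (intro mult_left_mono) auto
    then show ?thesis using True by (simp add: abs_mult mult.commute)
  qed (simp add: zero)
  show ?thesis
    using bound by (intro Bochner_Integration.integrable_bound[OF integrable_mult_right[OF int] m] AE_I2)
qed

lemma integrable_mult_test_fun:
  assumes "test_fun D \<phi>" "locally_integrable D G"
  shows "integrable lebesgue (\<lambda>x. G x * \<phi> x)"
    and "integrable lebesgue (\<lambda>x. G x * partial_d i \<phi> x)"
proof -
  have cont: "continuous_on UNIV (pd [] \<phi>)" "continuous_on UNIV (pd [i] \<phi>)"
    and S: "compact (closure {x. \<phi> x \<noteq> 0})" "closure {x. \<phi> x \<noteq> 0} \<subseteq> D"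
    using assms(1) unfolding test_fun_def by blast+
  from cont(1) show "integrable lebesgue (\<lambda>x. G x * \<phi> x)"
    by (intro integrable_mult_compact_support[OF _ S eq_0_outside_closure_support assms(2)]) simp_all
  from cont(2) show "integrable lebesgue (\<lambda>x. G x * partial_d i \<phi> x)"
    by (intro integrable_mult_compact_support[OF _ S partial_d_eq_0_outside_support assms(2)]) simp_all
qed

lemma locally_integrable_diff:
  "locally_integrable D u \<Longrightarrow> locally_integrable D v \<Longrightarrow> locally_integrable D (\<lambda>x. u x - v x)"
  unfolding locally_integrable_def by (auto intro: set_integral_diff)

lemma weak_partial_unique:
  assumes D: "open D" and w1: "weak_partial D u i G" and w2: "weak_partial D u i G'"
  shows "AE x in lebesgue. x \<in> D \<longrightarrow> G x = G' x"
proof -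
  have liG: "locally_integrable D G" and liG': "locally_integrable D G'"
    using w1 w2 by (auto simp: weak_partial_def)
  have "AE x in lebesgue. x \<in> D \<longrightarrow> G x - G' x = 0"
  proof (rule AE_eq_0_if_orthogonal_to_test_funs[OF D locally_integrable_diff[OF liG liG']])
    fix \<phi> assume t: "test_fun D \<phi>"
    have "(\<integral>x. (G x - G' x) * \<phi> x \<partial>lebesgue) = (\<integral>x. G x * \<phi> x - G' x * \<phi> x \<partial>lebesgue)"
      by (simp add: left_diff_distrib)
    also have "\<dots> = (\<integral>x. G x * \<phi> x \<partial>lebesgue) - (\<integral>x. G' x * \<phi> x \<partial>lebesgue)"
      using integrable_mult_test_fun(1)[OF t] liG liG' by simp
    finally show "(\<integral>x. (G x - G' x) * \<phi> x \<partial>lebesgue) = 0"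
      using w1 w2 t by (simp add: weak_partial_def)
  qed
  then show ?thesis by eventually_elim auto
qed

lemma weak_partial_diff:
  assumes w1: "weak_partial D u i G" and w2: "weak_partial D v i H"
  shows "weak_partial D (\<lambda>x. u x - v x) i (\<lambda>x. G x - H x)"
proof -
  have li: "locally_integrable D u" "locally_integrable D v" "locally_integrable D G" "locally_integrable D H"
    using w1 w2 by (auto simp: weak_partial_def)
  show ?thesis unfolding weak_partial_def
  proof (intro conjI allI impI locally_integrable_diff li)
    fix \<phi> assume t: "test_fun D \<phi>"
    have "(\<integral>x. (u x - v x) * partial_d i \<phi> x \<partial>lebesgue)
        = (\<integral>x. u x * partial_d i \<phi> x \<partial>lebesgue) - (\<integral>x. v x * partial_d i \<phi> x \<partial>lebesgue)"
      using integrable_mult_test_fun(2)[OF t] li by (simp add: left_diff_distrib)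
    also have "\<dots> = - ((\<integral>x. G x * \<phi> x \<partial>lebesgue) - (\<integral>x. H x * \<phi> x \<partial>lebesgue))"
      using w1 w2 t by (simp add: weak_partial_def)
    also have "\<dots> = - (\<integral>x. (G x - H x) * \<phi> x \<partial>lebesgue)"
      using integrable_mult_test_fun(1)[OF t] li by (simp add: left_diff_distrib)
    finally show "(\<integral>x. (u x - v x) * partial_d i \<phi> x \<partial>lebesgue) = - (\<integral>x. (G x - H x) * \<phi> x \<partial>lebesgue)" .
  qed
qed

lemma locally_integrable_imp_measurable:
  fixes f :: "real^'n::finite \<Rightarrow> real"
  assumes D: "open D" and li: "locally_integrable D f"
  shows "f \<in> borel_measurable (lebesgue_on D)"
proof -
  obtain \<D> where cnt: "countable \<D>" and sub: "\<D> \<subseteq> Pow D"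
    and box: "\<And>X. X \<in> \<D> \<Longrightarrow> \<exists>a b. X = cbox a b" and un: "\<Union>\<D> = D"
    using open_countable_Union_open_cbox[OF D] by metis
  show ?thesis
  proof (rule measurable_piecewise_restrict[OF cnt])
    fix X assume X: "X \<in> \<D>"
    then have "compact X" "X \<subseteq> D"
      using box[OF X] sub X by (auto simp: compact_cbox)
    moreover have "X \<in> sets lebesgue"
      using \<open>compact X\<close> by (simp add: compact_imp_closed)
    ultimately have "integrable (lebesgue_on X) f"
      using li by (simp add: locally_integrable_def integrable_restrict_space set_integrable_def)
    moreover have "restrict_space (lebesgue_on D) X = lebesgue_on X"
      using \<open>X \<in> sets lebesgue\<close> \<open>X \<subseteq> D\<close> D by (simp add: restrict_restrict_space Int_absorb1 Int_absorb2)
    ultimately show "f \<in> borel_measurable (restrict_space (lebesgue_on D) X)"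
      by simp
    show "X \<inter> space (lebesgue_on D) \<in> sets (lebesgue_on D)"
      using \<open>X \<in> sets lebesgue\<close> \<open>X \<subseteq> D\<close> D by (simp add: sets_restrict_space_iff Int_absorb2)
  qed (use un in auto)
qed

lemma lebesgue_translate:
  fixes t :: "'a::euclidean_space"
  shows "distr lebesgue lebesgue (\<lambda>x. t + x) = lebesgue"
    and "(\<lambda>x. t + x) \<in> lebesgue \<rightarrow>\<^sub>M lebesgue"
proof -
  have T: "(\<lambda>x. t + (\<Sum>j\<in>Basis. (1 * (x \<bullet> j)) *\<^sub>R j)) = (\<lambda>x. t + x)"
    by (simp add: euclidean_representation)
  show "(\<lambda>x. t + x) \<in> lebesgue \<rightarrow>\<^sub>M lebesgue"
    using lebesgue_affine_measurable[of "\<lambda>_. 1" t] T by simp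
  show "distr lebesgue lebesgue (\<lambda>x. t + x) = lebesgue"
    using lebesgue_affine_euclidean[of "\<lambda>_. 1" t] T by (simp add: density_1)
qed

lemma integrable_translate:
  fixes f :: "'a::euclidean_space \<Rightarrow> real"
  assumes "integrable lebesgue f"
  shows "integrable lebesgue (\<lambda>x. f (t + x))"
  using integrable_distr_eq[OF lebesgue_translate(2)[of t], of f] assms lebesgue_translate(1)[of t]
  by simp

lemma integral_translate:
  fixes f :: "'a::euclidean_space \<Rightarrow> real"
  shows "(\<integral>x. f (t + x) \<partial>lebesgue) = (\<integral>x. f x \<partial>lebesgue)"
proof (cases "integrable lebesgue f")
  case True
  then show ?thesis
    using integral_distr[OF lebesgue_translate(2)[of t], of f] lebesgue_translate(1)[of t] by simp
next
  case False
  then have "\<not> integrable lebesgue (\<lambda>x. f (t + x))"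
    using integrable_translate[of "\<lambda>x. f (t + x)" "-t"] by auto
  with False show ?thesis by (simp add: not_integrable_integral_eq)
qed

lemma measurable_on_translate:
  fixes f :: "'a::euclidean_space \<Rightarrow> real"
  assumes inv: "\<And>x. x + c \<in> D \<longleftrightarrow> x \<in> D" and D: "D \<in> sets lebesgue"
    and f: "f \<in> borel_measurable (lebesgue_on D)"
  shows "(\<lambda>x. f (x - c)) \<in> borel_measurable (lebesgue_on D)"
proof -
  have "(\<lambda>x. if x \<in> D then f x else 0) \<in> borel_measurable lebesgue"
    using borel_measurable_if[OF D] f by blast
  from measurable_compose[OF lebesgue_translate(2)[of "-c"] this]
  have "(\<lambda>x. if x \<in> D then f (x - c) else 0) \<in> borel_measurable lebesgue"
    using inv[of "x - c" for x] by (simp cong: if_cong)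
  then show ?thesis using borel_measurable_if[OF D] by blast
qed

lemma pd_translate: "pd is (\<lambda>x. \<phi> (x + c)) = (\<lambda>x. pd is \<phi> (x + c))"
proof (induction "is")
  case (Cons i "is")
  have "(\<lambda>t. pd is \<phi> (x + t *\<^sub>R axis i 1 + c)) = (\<lambda>t. pd is \<phi> (x + c + t *\<^sub>R axis i 1))" for x
    by (simp add: algebra_simps)
  then show ?case by (simp add: Cons partial_d_def)
qed simp

lemma test_fun_translate:
  fixes c :: "real^'n::finite"
  assumes inv: "\<And>x. x + c \<in> D \<longleftrightarrow> x \<in> D" and t: "test_fun D \<phi>"
  shows "test_fun D (\<lambda>x. \<phi> (x + c))"
proof -
  have cont: "continuous_on UNIV (pd is \<phi>)" for "is"
    using t by (simp add: test_fun_def)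
  have dif: "(\<lambda>t. pd is \<phi> (y + t *\<^sub>R axis i 1)) differentiable (at 0)" for "is" i y
    using t by (simp add: test_fun_def)
  have S: "{x. \<phi> (x + c) \<noteq> 0} = (+) (-c) ` {x. \<phi> x \<noteq> 0}"
    by (auto simp: image_iff intro!: exI[of _ "_ + c"])
  have cl: "closure {x. \<phi> (x + c) \<noteq> 0} = (+) (-c) ` closure {x. \<phi> x \<noteq> 0}"
    unfolding S by (rule closure_translation)
  show ?thesis
    unfolding test_fun_def pd_translate
  proof (intro conjI allI)
    fix "is"
    show "continuous_on UNIV (\<lambda>x. pd is \<phi> (x + c))"
      by (rule continuous_on_compose2[OF cont[of "is"]]) (auto intro!: continuous_intros)
    fix i x
    have "(\<lambda>t. pd is \<phi> (x + t *\<^sub>R axis i 1 + c)) = (\<lambda>t. pd is \<phi> (x + c + t *\<^sub>R axis i 1))"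
      by (simp add: algebra_simps)
    then show "(\<lambda>t. pd is \<phi> (x + t *\<^sub>R axis i 1 + c)) differentiable (at 0)"
      using dif[of "is" "x + c" i] by simp
  next
    show "compact (closure {x. \<phi> (x + c) \<noteq> 0})"
      unfolding cl using t by (intro compact_translation) (simp add: test_fun_def)
    show "closure {x. \<phi> (x + c) \<noteq> 0} \<subseteq> D"
      unfolding cl using t inv[of "- c + _"] by (auto simp: test_fun_def)
  qed
qed

lemma locally_integrable_translate:
  fixes c :: "real^'n::finite"
  assumes inv: "\<And>x. x + c \<in> D \<longleftrightarrow> x \<in> D" and li: "locally_integrable D u"
  shows "locally_integrable D (\<lambda>x. u (x - c))"
  unfolding locally_integrable_def
proof (intro allI impI)
  fix C assume C: "compact C \<and> C \<subseteq> D"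
  define C' where "C' = (+) (-c) ` C"
  have "compact C'"
    unfolding C'_def using C by (intro compact_translation) auto
  moreover have "C' \<subseteq> D"
    unfolding C'_def using C inv[of "- c + _"] by auto
  ultimately have "integrable lebesgue (\<lambda>y. indicator C' y *\<^sub>R u y)"
    using li by (simp add: locally_integrable_def set_integrable_def)
  from integrable_translate[OF this, of "- c"]
  show "set_integrable lebesgue C (\<lambda>x. u (x - c))"
    unfolding C'_def set_integrable_def by (simp add: indicator_def image_iff)
qed

lemma weak_partial_translate:
  fixes c :: "real^'n::finite"
  assumes inv: "\<And>x. x + c \<in> D \<longleftrightarrow> x \<in> D" and wp: "weak_partial D u i g"
  shows "weak_partial D (\<lambda>x. u (x - c)) i (\<lambda>x. g (x - c))"
  unfolding weak_partial_def
proof (intro conjI allI impI)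
  show "locally_integrable D (\<lambda>x. u (x - c))" "locally_integrable D (\<lambda>x. g (x - c))"
    using wp by (auto simp: weak_partial_def intro!: locally_integrable_translate[OF inv])
  fix \<phi> assume t: "test_fun D \<phi>"
  have pd: "partial_d i (\<lambda>y. \<phi> (y + c)) y = partial_d i \<phi> (y + c)" for y
    using pd_translate[of "[i]" \<phi> c] by (simp add: fun_eq_iff)
  have "(\<integral>x. u (x - c) * partial_d i \<phi> x \<partial>lebesgue) = (\<integral>y. u y * partial_d i (\<lambda>y. \<phi> (y + c)) y \<partial>lebesgue)"
    using integral_translate[of "\<lambda>x. u (x - c) * partial_d i \<phi> x" c] by (simp add: pd add.commute)
  also have "\<dots> = - (\<integral>y. g y * \<phi> (y + c) \<partial>lebesgue)"
    using wp test_fun_translate[OF inv t] by (simp add: weak_partial_def)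
  also have "(\<integral>y. g y * \<phi> (y + c) \<partial>lebesgue) = (\<integral>x. g (x - c) * \<phi> x \<partial>lebesgue)"
    using integral_translate[of "\<lambda>x. g (x - c) * \<phi> x" c] by (simp add: add.commute)
  finally show "(\<integral>x. u (x - c) * partial_d i \<phi> x \<partial>lebesgue) = - (\<integral>x. g (x - c) * \<phi> x \<partial>lebesgue)" .
qed

context
  fixes D :: "(real^'n::finite) set" and \<rho> :: "(real^'n \<Rightarrow> real) \<Rightarrow> ennreal"
  assumes bfn: "ri_bfn D \<rho>" and D_sets: "D \<in> sets lebesgue"
begin

lemma rho_eq_0_iff:
  assumes "nonneg_meas D f"
  shows "\<rho> f = 0 \<longleftrightarrow> (AE x in lebesgue_on D. f x = 0)"
proof -
  have "\<forall>f. nonneg_meas D f \<longrightarrow> (\<rho> f = 0 \<longleftrightarrow> (AE x in lebesgue_on D. f x = 0))"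
    using bfn unfolding ri_bfn_def by (elim conjE) assumption
  with assms show ?thesis by simp
qed

lemma rho_add:
  assumes "nonneg_meas D f" "nonneg_meas D g"
  shows "\<rho> (\<lambda>x. f x + g x) \<le> \<rho> f + \<rho> g"
proof -
  have "\<forall>f g. nonneg_meas D f \<and> nonneg_meas D g \<longrightarrow> \<rho> (\<lambda>x. f x + g x) \<le> \<rho> f + \<rho> g"
    using bfn unfolding ri_bfn_def by (elim conjE) assumption
  with assms show ?thesis by simp
qed

lemma rho_mono_AE:
  assumes "nonneg_meas D f" "nonneg_meas D g" "AE x in lebesgue_on D. g x \<le> f x"
  shows "\<rho> g \<le> \<rho> f"
proof -
  have "\<forall>f g. nonneg_meas D f \<and> nonneg_meas D g \<and> (AE x in lebesgue_on D. g x \<le> f x) \<longrightarrow> \<rho> g \<le> \<rho> f"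
    using bfn unfolding ri_bfn_def by (elim conjE) assumption
  with assms show ?thesis by simp
qed

lemma rho_equimeasurable:
  assumes "nonneg_meas D f" "nonneg_meas D g" "equimeasurable D f g"
  shows "\<rho> f = \<rho> g"
proof -
  have "\<forall>f g. nonneg_meas D f \<and> nonneg_meas D g \<and> equimeasurable D f g \<longrightarrow> \<rho> f = \<rho> g"
    using bfn unfolding ri_bfn_def by (elim conjE) assumption
  with assms show ?thesis by simp
qed

lemma rho_mono:
  assumes "nonneg_meas D f" "nonneg_meas D g" "\<And>x. x \<in> D \<Longrightarrow> g x \<le> f x"
  shows "\<rho> g \<le> \<rho> f"
  using assms by (intro rho_mono_AE AE_I2) (auto simp: space_restrict_space)

lemma rho_cong_AE:
  assumes "nonneg_meas D f" "nonneg_meas D g" "AE x in lebesgue. x \<in> D \<longrightarrow> f x = g x"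
  shows "\<rho> f = \<rho> g"
proof -
  have "AE x in lebesgue_on D. f x = g x"
    using assms(3) D_sets by (subst AE_restrict_space_iff) auto
  then show ?thesis
    using rho_mono_AE[OF assms(1,2)] rho_mono_AE[OF assms(2,1)]
    by (metis (mono_tags, lifting) eventually_mono order_antisym order_refl)
qed

lemma rho_zero: "\<rho> (\<lambda>x. 0) = 0"
  using rho_eq_0_iff[of "\<lambda>x. 0"] by (simp add: nonneg_meas_def)

lemma ri_space_zero: "(\<lambda>x. 0) \<in> ri_space D \<rho>"
  using rho_zero by (simp add: ri_space_def)

lemma rho_le_add:
  assumes f: "f \<in> borel_measurable (lebesgue_on D)"
    and g: "g \<in> borel_measurable (lebesgue_on D)" and h: "h \<in> borel_measurable (lebesgue_on D)"
    and le: "\<And>x. x \<in> D \<Longrightarrow> \<bar>f x\<bar> \<le> \<bar>g x\<bar> + \<bar>h x\<bar>"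
  shows "\<rho> (\<lambda>x. \<bar>f x\<bar>) \<le> \<rho> (\<lambda>x. \<bar>g x\<bar>) + \<rho> (\<lambda>x. \<bar>h x\<bar>)"
proof -
  have "\<rho> (\<lambda>x. \<bar>f x\<bar>) \<le> \<rho> (\<lambda>x. \<bar>g x\<bar> + \<bar>h x\<bar>)"
    using f g h le by (intro rho_mono) (auto simp: nonneg_meas_def)
  also have "\<dots> \<le> \<rho> (\<lambda>x. \<bar>g x\<bar>) + \<rho> (\<lambda>x. \<bar>h x\<bar>)"
    using g h by (intro rho_add) (auto simp: nonneg_meas_def)
  finally show ?thesis .
qed

lemma ri_space_le_add:
  assumes "f \<in> borel_measurable (lebesgue_on D)" "g \<in> ri_space D \<rho>" "h \<in> ri_space D \<rho>"
    and "\<And>x. x \<in> D \<Longrightarrow> \<bar>f x\<bar> \<le> \<bar>g x\<bar> + \<bar>h x\<bar>"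
  shows "f \<in> ri_space D \<rho>"
  using rho_le_add[of f g h] assms by (auto simp: ri_space_def order_le_less_trans)

lemma ri_norm_le_add:
  assumes "f \<in> borel_measurable (lebesgue_on D)" "g \<in> ri_space D \<rho>" "h \<in> ri_space D \<rho>"
    and "\<And>x. x \<in> D \<Longrightarrow> \<bar>f x\<bar> \<le> \<bar>g x\<bar> + \<bar>h x\<bar>"
  shows "ri_norm \<rho> f \<le> ri_norm \<rho> g + ri_norm \<rho> h"
proof -
  have fin: "\<rho> (\<lambda>x. \<bar>g x\<bar>) < \<infinity>" "\<rho> (\<lambda>x. \<bar>h x\<bar>) < \<infinity>"
    using assms(2,3) by (simp_all add: ri_space_def)
  have "enn2real (\<rho> (\<lambda>x. \<bar>f x\<bar>)) \<le> enn2real (\<rho> (\<lambda>x. \<bar>g x\<bar>) + \<rho> (\<lambda>x. \<bar>h x\<bar>))"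
    using rho_le_add[of f g h] assms fin by (intro enn2real_mono) (auto simp: ri_space_def)
  then show ?thesis
    using fin by (simp add: ri_norm_def enn2real_plus)
qed

lemma ri_space_diff:
  assumes "f \<in> ri_space D \<rho>" "g \<in> ri_space D \<rho>"
  shows "(\<lambda>x. f x - g x) \<in> ri_space D \<rho>"
proof (rule ri_space_le_add[OF _ assms])
  show "(\<lambda>x. f x - g x) \<in> borel_measurable (lebesgue_on D)"
    using assms by (auto simp: ri_space_def)
qed linarith

lemma ri_space_mult_indicator:
  assumes f: "f \<in> ri_space D \<rho>" and A: "A \<in> sets lebesgue"
  shows "(\<lambda>x. f x * indicator A x) \<in> ri_space D \<rho>"
    and "ri_norm \<rho> (\<lambda>x. f x * indicator A x) \<le> ri_norm \<rho> f"
proof -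
  have "f \<in> borel_measurable (lebesgue_on D)"
    using f by (simp add: ri_space_def)
  moreover have "indicator A \<in> borel_measurable (lebesgue_on D)"
    using A by (intro measurable_restrict_space1 borel_measurable_indicator)
  ultimately have m: "(\<lambda>x. f x * indicator A x) \<in> borel_measurable (lebesgue_on D)"
    by (rule borel_measurable_times)
  have le: "\<bar>f x * indicator A x\<bar> \<le> \<bar>f x\<bar> + \<bar>0\<bar>" for x
    by (simp add: indicator_def)
  show "(\<lambda>x. f x * indicator A x) \<in> ri_space D \<rho>"
    using ri_space_le_add[OF m f ri_space_zero le] .
  have "ri_norm \<rho> (\<lambda>x. 0) = 0"
    by (simp add: ri_norm_def rho_zero)
  then show "ri_norm \<rho> (\<lambda>x. f x * indicator A x) \<le> ri_norm \<rho> f"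
    using ri_norm_le_add[OF m f ri_space_zero le] by simp
qed

lemma rho_translate:
  assumes inv: "\<And>x. x + c \<in> D \<longleftrightarrow> x \<in> D" and f: "nonneg_meas D f"
  shows "\<rho> (\<lambda>x. f (x - c)) = \<rho> f"
proof (rule rho_equimeasurable)
  show "nonneg_meas D (\<lambda>x. f (x - c))"
    using f measurable_on_translate[OF inv D_sets] inv[of "x - c" for x] by (auto simp: nonneg_meas_def)
  have "{x\<in>D. f (x - c) > t} = (\<lambda>x. x + c) ` {x\<in>D. f x > t}" for t
  proof (intro set_eqI iffI)
    fix x assume "x \<in> {x\<in>D. t < f (x - c)}"
    then show "x \<in> (\<lambda>x. x + c) ` {x\<in>D. t < f x}"
      using inv[of "x - c"] by (intro image_eqI[of _ _ "x - c"]) auto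
  qed (use inv in auto)
  then show "equimeasurable D (\<lambda>x. f (x - c)) f"
    unfolding equimeasurable_def using emeasure_lebesgue_affine[of 1 c] by simp
qed (rule f)

lemma ri_space_translate:
  assumes inv: "\<And>x. x + c \<in> D \<longleftrightarrow> x \<in> D" and f: "f \<in> ri_space D \<rho>"
  shows "(\<lambda>x. f (x - c)) \<in> ri_space D \<rho>" and "ri_norm \<rho> (\<lambda>x. f (x - c)) = ri_norm \<rho> f"
proof -
  have fm: "f \<in> borel_measurable (lebesgue_on D)"
    using f by (simp add: ri_space_def)
  then have "\<rho> (\<lambda>x. \<bar>f (x - c)\<bar>) = \<rho> (\<lambda>x. \<bar>f x\<bar>)"
    using rho_translate[OF inv, of "\<lambda>x. \<bar>f x\<bar>"] by (simp add: nonneg_meas_def)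
  then show "(\<lambda>x. f (x - c)) \<in> ri_space D \<rho>" and "ri_norm \<rho> (\<lambda>x. f (x - c)) = ri_norm \<rho> f"
    using f measurable_on_translate[OF inv D_sets fm] by (simp_all add: ri_space_def ri_norm_def)
qed

end

context
  fixes D :: "(real^'n::finite) set" and \<rho> :: "(real^'n \<Rightarrow> real) \<Rightarrow> ennreal"
  assumes D: "open D" and bfn: "ri_bfn D \<rho>"
begin

lemma weak_partial_measurable: "weak_partial D u i g \<Longrightarrow> g \<in> borel_measurable (lebesgue_on D)"
  using locally_integrable_imp_measurable[OF D] by (simp add: weak_partial_def)

lemma sob_norm_eq:
  assumes G: "\<forall>i. weak_partial D u i (G i)"
  shows "sob_norm D \<rho> u = ri_norm \<rho> u + ri_norm \<rho> (\<lambda>x. \<Sum>i\<in>UNIV. \<bar>G i x\<bar>)"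
proof -
  have W: "\<forall>i. weak_partial D u i (weak_grad D u i)"
    unfolding weak_grad_def by (rule someI_ex[of "\<lambda>G. \<forall>i. weak_partial D u i (G i)"]) (use G in blast)
  have "AE x in lebesgue. \<forall>i\<in>UNIV. x \<in> D \<longrightarrow> weak_grad D u i x = G i x"
    using W G by (intro AE_ball_countable' weak_partial_unique[OF D]) auto
  then have "AE x in lebesgue. x \<in> D \<longrightarrow>
      \<bar>\<Sum>i\<in>UNIV. \<bar>weak_grad D u i x\<bar>\<bar> = \<bar>\<Sum>i\<in>UNIV. \<bar>G i x\<bar>\<bar>"
    by eventually_elim auto
  moreover have "weak_grad D u i \<in> borel_measurable (lebesgue_on D)" "G i \<in> borel_measurable (lebesgue_on D)" for i
    using W G weak_partial_measurable by blast+
  ultimately have "\<rho> (\<lambda>x. \<bar>\<Sum>i\<in>UNIV. \<bar>weak_grad D u i x\<bar>\<bar>) = \<rho> (\<lambda>x. \<bar>\<Sum>i\<in>UNIV. \<bar>G i x\<bar>\<bar>)"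
    using D bfn by (intro rho_cong_AE) (auto simp: nonneg_meas_def)
  then show ?thesis
    unfolding sob_norm_def ri_norm_def by simp
qed

lemma sobolev_translate:
  assumes inv: "\<And>x. x + c \<in> D \<longleftrightarrow> x \<in> D" and u: "u \<in> sobolev D \<rho>"
  shows "(\<lambda>x. u (x - c)) \<in> sobolev D \<rho>" and "sob_norm D \<rho> (\<lambda>x. u (x - c)) = sob_norm D \<rho> u"
proof -
  obtain G where G: "\<forall>i. weak_partial D u i (G i)"
    and Gs: "(\<lambda>x. \<Sum>i\<in>UNIV. \<bar>G i x\<bar>) \<in> ri_space D \<rho>" and us: "u \<in> ri_space D \<rho>"
    using u by (auto simp: sobolev_def)
  have G': "\<forall>i. weak_partial D (\<lambda>x. u (x - c)) i (\<lambda>x. G i (x - c))"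
    using G weak_partial_translate[OF inv] by blast
  have "D \<in> sets lebesgue"
    using D by simp
  note translate = ri_space_translate[OF bfn this inv]
  show "(\<lambda>x. u (x - c)) \<in> sobolev D \<rho>"
    unfolding sobolev_def using translate(1)[OF us] translate(1)[OF Gs] G'
    by (intro CollectI conjI exI[of _ "\<lambda>i x. G i (x - c)"]) simp_all
  show "sob_norm D \<rho> (\<lambda>x. u (x - c)) = sob_norm D \<rho> u"
    using sob_norm_eq[OF G'] sob_norm_eq[OF G] translate(2)[OF us] translate(2)[OF Gs] by simp
qed

lemma sobolev_diff:
  assumes u: "u \<in> sobolev D \<rho>" and v: "v \<in> sobolev D \<rho>"
  shows "(\<lambda>x. u x - v x) \<in> sobolev D \<rho>"
proof -
  obtain G where G: "\<forall>i. weak_partial D u i (G i)"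
    and Gs: "(\<lambda>x. \<Sum>i\<in>UNIV. \<bar>G i x\<bar>) \<in> ri_space D \<rho>" and us: "u \<in> ri_space D \<rho>"
    using u by (auto simp: sobolev_def)
  obtain H where H: "\<forall>i. weak_partial D v i (H i)"
    and Hs: "(\<lambda>x. \<Sum>i\<in>UNIV. \<bar>H i x\<bar>) \<in> ri_space D \<rho>" and vs: "v \<in> ri_space D \<rho>"
    using v by (auto simp: sobolev_def)
  have "(\<lambda>x. \<Sum>i\<in>UNIV. \<bar>G i x - H i x\<bar>) \<in> ri_space D \<rho>"
  proof (rule ri_space_le_add[OF bfn _ _ Gs Hs])
    have "G i \<in> borel_measurable (lebesgue_on D)" "H i \<in> borel_measurable (lebesgue_on D)" for i
      using G H weak_partial_measurable by blast+
    then show "(\<lambda>x. \<Sum>i\<in>UNIV. \<bar>G i x - H i x\<bar>) \<in> borel_measurable (lebesgue_on D)"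
      by (intro borel_measurable_sum borel_measurable_abs borel_measurable_diff)
    show "\<bar>\<Sum>i\<in>UNIV. \<bar>G i x - H i x\<bar>\<bar> \<le> \<bar>\<Sum>i\<in>UNIV. \<bar>G i x\<bar>\<bar> + \<bar>\<Sum>i\<in>UNIV. \<bar>H i x\<bar>\<bar>" for x
      by (simp add: sum_nonneg sum.distrib[symmetric] sum_mono abs_triangle_ineq4)
  qed (use D in simp)
  moreover have "\<forall>i. weak_partial D (\<lambda>x. u x - v x) i (\<lambda>x. G i x - H i x)"
    using G H weak_partial_diff by blast
  ultimately show ?thesis
    unfolding sobolev_def using ri_space_diff[OF bfn _ us vs] D
    by (intro CollectI conjI exI[of _ "\<lambda>i x. G i x - H i x"]) simp_all
qed

lemma sobolev0_translate:
  assumes inv: "\<And>x. x + c \<in> D \<longleftrightarrow> x \<in> D" and u: "u \<in> sobolev0 D \<rho>"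
  shows "(\<lambda>x. u (x - c)) \<in> sobolev0 D \<rho>" and "sob_norm D \<rho> (\<lambda>x. u (x - c)) = sob_norm D \<rho> u"
proof -
  have inv': "x + (- c) \<in> D \<longleftrightarrow> x \<in> D" for x
    using inv[of "x - c"] by simp
  have us: "u \<in> sobolev D \<rho>"
    using u by (simp add: sobolev0_def)
  obtain \<phi> :: "nat \<Rightarrow> real^'n \<Rightarrow> real" where \<phi>: "\<And>j. test_fun D (\<phi> j)" "\<And>j. \<phi> j \<in> sobolev D \<rho>"
    and lim: "(\<lambda>j. sob_norm D \<rho> (\<lambda>x. \<phi> j x - u x)) \<longlonglongrightarrow> 0"
    using u by (auto simp: sobolev0_def)
  have "test_fun D (\<lambda>x. \<phi> j (x - c))" for j
    using test_fun_translate[OF inv' \<phi>(1)[of j]] by simp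
  moreover have "(\<lambda>x. \<phi> j (x - c)) \<in> sobolev D \<rho>" for j
    by (rule sobolev_translate(1)[OF inv \<phi>(2)])
  moreover have "sob_norm D \<rho> (\<lambda>x. \<phi> j (x - c) - u (x - c)) = sob_norm D \<rho> (\<lambda>x. \<phi> j x - u x)" for j
    using sobolev_translate(2)[OF inv sobolev_diff[OF \<phi>(2)[of j] us]] by simp
  ultimately show "(\<lambda>x. u (x - c)) \<in> sobolev0 D \<rho>"
    unfolding sobolev0_def using sobolev_translate(1)[OF inv us] lim
    by (intro CollectI conjI exI[of _ "\<lambda>j x. \<phi> j (x - c)"]) auto
  show "sob_norm D \<rho> (\<lambda>x. u (x - c)) = sob_norm D \<rho> u"
    by (rule sobolev_translate(2)[OF inv us])
qed

lemma zero_in_sobolev0: "(\<lambda>x. 0) \<in> sobolev0 D \<rho>" and sob_norm_zero: "sob_norm D \<rho> (\<lambda>x. 0) = 0"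
proof -
  have "pd is (\<lambda>x::real^'n. 0) = (\<lambda>x. 0)" for "is"
    by (induction "is") (auto simp: partial_d_def)
  then have test: "test_fun D (\<lambda>x. 0)"
    unfolding test_fun_def by auto
  have grad: "\<forall>i. weak_partial D (\<lambda>x. 0) i (\<lambda>x. 0)"
    by (simp add: weak_partial_def locally_integrable_def set_integrable_def)
  then have sob: "(\<lambda>x. 0) \<in> sobolev D \<rho>"
    unfolding sobolev_def using ri_space_zero[OF bfn] D by auto
  show norm: "sob_norm D \<rho> (\<lambda>x. 0) = 0"
    using sob_norm_eq[OF grad] rho_zero[OF bfn] D by (simp add: ri_norm_def)
  show "(\<lambda>x. 0) \<in> sobolev0 D \<rho>"
    unfolding sobolev0_def using sob test norm by (intro CollectI conjI exI[of _ "\<lambda>_ x. 0"]) auto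
qed

end

section \<open>The shift argument\<close>

lemma sets_lebesgue_tail:
  fixes D :: "(real^'n::finite) set"
  assumes "D \<in> sets lebesgue"
  shows "{x \<in> D. r < \<bar>x $ i\<bar>} \<in> sets lebesgue"
proof -
  have "open {x :: real^'n. r < \<bar>x $ i\<bar>}"
    by (intro open_Collect_less continuous_intros)
  then have "{x :: real^'n. r < \<bar>x $ i\<bar>} \<in> sets lebesgue"
    by simp
  with assms show ?thesis
    by (simp add: Collect_conj_eq Int_def[symmetric] sets.Int)
qed

lemma ri_norm_tail_tendsto_0:
  fixes D :: "(real^'n::finite) set"
  assumes ac: "abs_cont_norm D \<rho>" and D: "D \<in> sets lebesgue" and f: "f \<in> ri_space D \<rho>"
  shows "(\<lambda>k. ri_norm \<rho> (\<lambda>x. f x * indicator {x \<in> D. real k < \<bar>x $ i\<bar>} x)) \<longlonglongrightarrow> 0"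
proof -
  have "{x \<in> D. real k < \<bar>x $ i\<bar>} \<in> sets lebesgue" for k
    using D by (rule sets_lebesgue_tail)
  moreover have "(\<lambda>k. indicator {x \<in> D. real k < \<bar>x $ i\<bar>} x :: real) \<longlonglongrightarrow> 0" for x
  proof (rule tendsto_eventually)
    show "\<forall>\<^sub>F k in sequentially. indicator {x \<in> D. real k < \<bar>x $ i\<bar>} x = (0::real)"
      unfolding eventually_sequentially
      by (rule exI[of _ "nat \<lceil>\<bar>x $ i\<bar>\<rceil>"]) (auto simp: indicator_def)
  qed
  ultimately show ?thesis
    using ac f unfolding abs_cont_norm_def by (auto intro!: AE_I2)
qed

lemma ri_norm_le_shift_approx:
  fixes D :: "(real^'n::finite) set" and i :: 'n and s :: real
  defines "c \<equiv> s *\<^sub>R axis i 1"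
  assumes bfn: "ri_bfn D \<rho>" and D: "D \<in> sets lebesgue" and inv: "\<And>x. x + c \<in> D \<longleftrightarrow> x \<in> D"
    and u: "u \<in> ri_space D \<rho>" and y: "y \<in> ri_space D \<rho>" and s: "R + S < s"
  shows "ri_norm \<rho> u \<le> ri_norm \<rho> (\<lambda>x. u x * indicator {x \<in> D. R < \<bar>x $ i\<bar>} x)
      + ri_norm \<rho> (\<lambda>x. u (x - c) - y x) + ri_norm \<rho> (\<lambda>x. y x * indicator {x \<in> D. S < \<bar>x $ i\<bar>} x)"
proof -
  note tail_sets = sets_lebesgue_tail[OF D]
  define core where "core x = u x * indicator {x. \<bar>x $ i\<bar> \<le> R} x" for x
  note space = ri_space_mult_indicator[OF bfn D] and translate = ri_space_translate[OF bfn D inv]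
  have core: "core \<in> ri_space D \<rho>"
    unfolding core_def by (rule space(1)[OF u]) simp
  have "ri_norm \<rho> u \<le> ri_norm \<rho> core + ri_norm \<rho> (\<lambda>x. u x * indicator {x \<in> D. R < \<bar>x $ i\<bar>} x)"
    using u by (intro ri_norm_le_add[OF bfn D _ core space(1)[OF u tail_sets]])
      (auto simp: ri_space_def core_def indicator_def)
  moreover have "ri_norm \<rho> core = ri_norm \<rho> (\<lambda>x. core (x - c))"
    using translate(2)[OF core] by simp
  moreover have "ri_norm \<rho> (\<lambda>x. core (x - c))
      \<le> ri_norm \<rho> (\<lambda>x. u (x - c) - y x) + ri_norm \<rho> (\<lambda>x. y x * indicator {x \<in> D. S < \<bar>x $ i\<bar>} x)"
  proof (rule ri_norm_le_add[OF bfn D _ ri_space_diff[OF bfn D translate(1)[OF u] y] space(1)[OF y tail_sets]])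
    show "(\<lambda>x. core (x - c)) \<in> borel_measurable (lebesgue_on D)"
      using translate(1)[OF core] by (simp add: ri_space_def)
    fix x assume "x \<in> D"
    show "\<bar>core (x - c)\<bar> \<le> \<bar>u (x - c) - y x\<bar> + \<bar>y x * indicator {x \<in> D. S < \<bar>x $ i\<bar>} x\<bar>"
    proof (cases "\<bar>x $ i - s\<bar> \<le> R")
      case True
      then have "S < \<bar>x $ i\<bar>"
        using s by linarith
      then show ?thesis
        using True \<open>x \<in> D\<close> by (simp add: core_def c_def)
    qed (simp add: core_def c_def)
  qed
  ultimately show ?thesis
    by linarith
qed

lemma ri_norm_le_net_radius:
  fixes N :: nat
  assumes D: "open D" and bX: "ri_bfn D \<rho>X" and bY: "ri_bfn D \<rho>Y"
    and sub: "sobolev0 D \<rho>X \<subseteq> ri_space D \<rho>Y" and ac: "abs_cont_norm D \<rho>Y"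
    and inv: "\<And>s x. x + s *\<^sub>R axis i 1 \<in> D \<longleftrightarrow> x \<in> D"
    and u: "u \<in> sobolev0 D \<rho>X" "sob_norm D \<rho>X u \<le> 1"
    and y: "\<And>j. j < N \<Longrightarrow> y j \<in> ri_space D \<rho>Y"
    and cover: "\<And>w. w \<in> sobolev0 D \<rho>X \<Longrightarrow> sob_norm D \<rho>X w \<le> 1 \<Longrightarrow>
                  \<exists>j<N. ri_norm \<rho>Y (\<lambda>x. w x - y j x) \<le> \<epsilon>"
  shows "ri_norm \<rho>Y u \<le> \<epsilon>"
proof (rule field_le_epsilon)
  fix e :: real assume "0 < e"
  then have \<delta>: "0 < e / 2" by simp
  have Dsets: "D \<in> sets lebesgue"
    using D by simp
  note tail = ri_norm_tail_tendsto_0[OF ac Dsets, of _ i]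
  obtain R :: nat where R: "ri_norm \<rho>Y (\<lambda>x. u x * indicator {x \<in> D. real R < \<bar>x $ i\<bar>} x) < e / 2"
  proof -
    have "u \<in> ri_space D \<rho>Y"
      using u(1) sub by blast
    from order_tendstoD(2)[OF tail[OF this] \<delta>] show ?thesis
      using that by (auto simp: eventually_sequentially)
  qed
  have "\<forall>\<^sub>F k in sequentially. \<forall>j\<in>{..<N}.
      ri_norm \<rho>Y (\<lambda>x. y j x * indicator {x \<in> D. real k < \<bar>x $ i\<bar>} x) < e / 2"
    using order_tendstoD(2)[OF tail[OF y] \<delta>] by (intro eventually_ball_finite) auto
  then obtain S :: nat where S:
    "\<And>j. j < N \<Longrightarrow> ri_norm \<rho>Y (\<lambda>x. y j x * indicator {x \<in> D. real S < \<bar>x $ i\<bar>} x) < e / 2"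
    by (auto simp: eventually_sequentially)
  define s where "s = real R + real S + 1"
  have w: "(\<lambda>x. u (x - s *\<^sub>R axis i 1)) \<in> sobolev0 D \<rho>X"
      "sob_norm D \<rho>X (\<lambda>x. u (x - s *\<^sub>R axis i 1)) \<le> 1"
    using sobolev0_translate[OF D bX inv u(1)] u(2) by auto
  obtain j where "j < N" and j: "ri_norm \<rho>Y (\<lambda>x. u (x - s *\<^sub>R axis i 1) - y j x) \<le> \<epsilon>"
    using cover[OF w] by blast
  have "ri_norm \<rho>Y u \<le> ri_norm \<rho>Y (\<lambda>x. u x * indicator {x \<in> D. real R < \<bar>x $ i\<bar>} x)
      + ri_norm \<rho>Y (\<lambda>x. u (x - s *\<^sub>R axis i 1) - y j x)
      + ri_norm \<rho>Y (\<lambda>x. y j x * indicator {x \<in> D. real S < \<bar>x $ i\<bar>} x)"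
    using u sub y[OF \<open>j < N\<close>] inv by (intro ri_norm_le_shift_approx[OF bY Dsets]) (auto simp: s_def)
  then show "ri_norm \<rho>Y u \<le> \<epsilon> + e"
    using R S[OF \<open>j < N\<close>] j by linarith
qed

lemma Inf_eq_of_bounds:
  fixes E :: real
  assumes above: "\<And>\<epsilon>. E < \<epsilon> \<Longrightarrow> \<epsilon> \<in> S" and below: "\<And>\<epsilon>. \<epsilon> \<in> S \<Longrightarrow> E \<le> \<epsilon>"
  shows "Inf S = E"
proof (rule antisym)
  have "E + 1 \<in> S"
    by (rule above) simp
  then show "E \<le> Inf S"
    using below by (intro cInf_greatest) auto
  have "bdd_below S"
    using below by (rule bdd_belowI)
  show "Inf S \<le> E"
  proof (rule field_le_epsilon)
    fix e :: real assume "0 < e"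
    then have "E + e \<in> S"
      by (intro above) simp
    then show "Inf S \<le> E + e"
      using \<open>bdd_below S\<close> by (rule cInf_lower)
  qed
qed

lemma ri_norm_le_emb_norm:
  assumes emb: "sobolev_embedded D \<rho>X \<rho>Y" and u: "u \<in> sobolev0 D \<rho>X" "sob_norm D \<rho>X u \<le> 1"
  shows "ri_norm \<rho>Y u \<le> emb_norm D \<rho>X \<rho>Y"
proof -
  obtain C where C: "\<And>v. v \<in> sobolev0 D \<rho>X \<Longrightarrow> ri_norm \<rho>Y v \<le> C * sob_norm D \<rho>X v"
    using emb by (auto simp: sobolev_embedded_def)
  have "ri_norm \<rho>Y v \<le> \<bar>C\<bar>" if "v \<in> sobolev0 D \<rho>X" "sob_norm D \<rho>X v \<le> 1" for v
  proof -
    have "0 \<le> sob_norm D \<rho>X v"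
      by (simp add: sob_norm_def ri_norm_def)
    then have "C * sob_norm D \<rho>X v \<le> \<bar>C\<bar> * sob_norm D \<rho>X v"
      by (intro mult_right_mono) auto
    also have "\<dots> \<le> \<bar>C\<bar>"
      using that(2) by (intro mult_left_le) auto
    finally have "C * sob_norm D \<rho>X v \<le> \<bar>C\<bar>" .
    then show ?thesis
      using C[OF that(1)] by linarith
  qed
  then show ?thesis
    unfolding emb_norm_def using u by (intro cSup_upper bdd_aboveI[of _ "\<bar>C\<bar>"]) auto
qed

lemma entropy_number_eq_emb_norm:
  fixes D :: "(real^'n::finite) set"
  assumes D: "open D" and inv: "\<And>s x. x + s *\<^sub>R axis i 1 \<in> D \<longleftrightarrow> x \<in> D"
    and bX: "ri_bfn D \<rho>X" and bY: "ri_bfn D \<rho>Y" and emb: "sobolev_embedded D \<rho>X \<rho>Y"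
    and ac: "abs_cont_norm D \<rho>Y"
  shows "entropy_number D \<rho>X \<rho>Y m = emb_norm D \<rho>X \<rho>Y"
  unfolding entropy_number_def
proof (rule Inf_eq_of_bounds, goal_cases)
  have zero: "(\<lambda>x. 0) \<in> sobolev0 D \<rho>X" "sob_norm D \<rho>X (\<lambda>x. 0) = 0"
    using zero_in_sobolev0[OF D bX] sob_norm_zero[OF D bX] .
  case (1 \<epsilon>)
  have "0 \<le> emb_norm D \<rho>X \<rho>Y"
    using ri_norm_le_emb_norm[OF emb zero(1)] zero(2) enn2real_nonneg[of "\<rho>Y (\<lambda>x. \<bar>0\<bar>)"]
    unfolding ri_norm_def by linarith
  show ?case
  proof (intro CollectI conjI exI[of _ "\<lambda>_ _. 0"] allI impI ballI)
    show "0 < \<epsilon>"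
      using 1 \<open>0 \<le> emb_norm D \<rho>X \<rho>Y\<close> by linarith
    show "(\<lambda>_. 0) \<in> ri_space D \<rho>Y" for j
      by (rule ri_space_zero[OF bY]) (use D in simp)
    fix u assume "u \<in> sobolev0 D \<rho>X" "sob_norm D \<rho>X u \<le> 1"
    then have "ri_norm \<rho>Y (\<lambda>x. u x - 0) \<le> \<epsilon>"
      using ri_norm_le_emb_norm[OF emb] 1 by fastforce
    then show "\<exists>j < (2::nat)^(m-1). ri_norm \<rho>Y (\<lambda>x. u x - 0) \<le> \<epsilon>"
      by (intro exI[of _ 0]) simp
  qed
next
  case (2 \<epsilon>)
  then obtain y :: "nat \<Rightarrow> real^'n \<Rightarrow> real" where y: "\<And>j. j < 2^(m-1) \<Longrightarrow> y j \<in> ri_space D \<rho>Y"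
    and cover: "\<And>w. w \<in> sobolev0 D \<rho>X \<Longrightarrow> sob_norm D \<rho>X w \<le> 1 \<Longrightarrow>
                  \<exists>j < 2^(m-1). ri_norm \<rho>Y (\<lambda>x. w x - y j x) \<le> \<epsilon>"
    by blast
  have sub: "sobolev0 D \<rho>X \<subseteq> ri_space D \<rho>Y"
    using emb by (simp add: sobolev_embedded_def)
  note radius = ri_norm_le_net_radius[OF D bX bY sub ac inv _ _ y cover]
  show ?case
    unfolding emb_norm_def
  proof (rule cSup_least)
    show "{ri_norm \<rho>Y u |u. u \<in> sobolev0 D \<rho>X \<and> sob_norm D \<rho>X u \<le> 1} \<noteq> {}"
      using zero_in_sobolev0[OF D bX] sob_norm_zero[OF D bX] by force
  qed (use radius in blast)
qed

lemma open_slab_domain: "open (slab_domain K a b)"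
proof -
  have "slab_domain K a b = (\<Inter>i\<in>-K. {x. a i < x $ i} \<inter> {x. x $ i < b i})"
    by (auto simp: slab_domain_def)
  then show ?thesis
    by (simp add: open_INT open_Int open_Collect_less continuous_intros)
qed

lemma slab_domain_translate:
  assumes "i \<in> K"
  shows "x + s *\<^sub>R axis i 1 \<in> slab_domain K a b \<longleftrightarrow> x \<in> slab_domain K a b"
  using assms by (auto simp: slab_domain_def axis_def)

text \<open>Only the unbounded direction \<open>i\<^sub>0 \<in> K\<close> is used.\<close>

theorem mainTheorem2:
  fixes K :: "'n::finite set" and a b :: "'n \<Rightarrow> real"
    and \<rho>X \<rho>Y :: "(real^'n \<Rightarrow> real) \<Rightarrow> ennreal"
  assumes "K \<noteq> {}" and "K \<noteq> UNIV"
    and "\<forall>i. i \<notin> K \<longrightarrow> a i < b i"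
    and "ri_bfn (slab_domain K a b) \<rho>X"
    and "ri_bfn (slab_domain K a b) \<rho>Y"
    and "sobolev_embedded (slab_domain K a b) \<rho>X \<rho>Y"
    and "abs_cont_norm (slab_domain K a b) \<rho>Y"
  shows "(\<forall>m::nat. m \<ge> 1 \<longrightarrow>
            entropy_number (slab_domain K a b) \<rho>X \<rho>Y m = emb_norm (slab_domain K a b) \<rho>X \<rho>Y)
       \<and> (\<lambda>m. entropy_number (slab_domain K a b) \<rho>X \<rho>Y m)
            \<longlonglongrightarrow> emb_norm (slab_domain K a b) \<rho>X \<rho>Y"
proof -
  obtain i0 where "i0 \<in> K"
    using assms(1) by blast
  then have "entropy_number (slab_domain K a b) \<rho>X \<rho>Y m = emb_norm (slab_domain K a b) \<rho>X \<rho>Y" for m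
    using assms(4-7)
    by (intro entropy_number_eq_emb_norm[OF open_slab_domain slab_domain_translate]) simp_all
  then show ?thesis
    by simp
qed

end
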